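(* Let $q$ be a prime power, $m$ a positive integer, and let $g_{11}(x),g_{12}(x),f_{11}(x),f_{12}(x)\in\mathbb{F}_q[x]$ be such that $g_{11}(x)\mid x^m-1$ and $f_{11}(x)\mid x^m-1$. Suppose $\gcd(g_{11}(x),g_{12}(x))=1$, $\gcd(f_{11}(x),f_{12}(x))=1$ and $\gcd(f_{11}(x),g_{11}(x))=1$. Then the following are equivalent: (1) $\gcd\left(\dfrac{x^m-1}{f_{11}(x)},\dfrac{x^m-1}{g_{11}(x)},\,g_{11}(x)f_{12}(x)-g_{12}(x)f_{11}(x)\right)=1$; (2) $\gcd\big(x^m-1,\,g_{11}(x)f_{12}(x)-g_{12}(x)f_{11}(x)\big)=1$. *)

theory Defs
  imports "HOL-Computational_Algebra.Computational_Algebra"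
begin

end

theory Submission
  imports Defs
begin

text \<open>
  Put \<open>N = x\<^sup>m - 1\<close> and \<open>D = g\<^sub>1\<^sub>1 f\<^sub>1\<^sub>2 - g\<^sub>1\<^sub>2 f\<^sub>1\<^sub>1\<close>.
  A common divisor of \<open>D\<close> and \<open>f\<^sub>1\<^sub>1\<close> divides \<open>g\<^sub>1\<^sub>1 f\<^sub>1\<^sub>2\<close>, hence
  \<open>g\<^sub>1\<^sub>1\<close> (as it is coprime to \<open>f\<^sub>1\<^sub>2\<close>), hence is a unit; so \<open>gcd N D\<close> is
  coprime to \<open>f\<^sub>1\<^sub>1\<close> and, symmetrically, to \<open>g\<^sub>1\<^sub>1\<close>. It therefore divides both
  \<open>N / f\<^sub>1\<^sub>1\<close> and \<open>N / g\<^sub>1\<^sub>1\<close>, and the two gcds in the statement are in fact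
  equal.
\<close>

lemma coprime_dvd_cross_diff:
  fixes a b f g d :: "'a::ring_gcd"
  assumes "coprime f a" and "coprime f g" and "d dvd g * a - b * f"
  shows "coprime d f"
proof (rule coprimeI)
  fix c
  assume "c dvd d" and "c dvd f"
  then have "c dvd g * a - b * f + b * f"
    using assms(3) by (meson dvd_add dvd_mult dvd_trans)
  then have "c dvd g * a"
    by simp
  moreover have "coprime c a"
    using \<open>c dvd f\<close> assms(1) coprime_imp_coprime dvd_trans by blast
  ultimately have "c dvd g"
    by (simp add: coprime_dvd_mult_left_iff)
  then show "is_unit c"
    using \<open>c dvd f\<close> assms(2) coprime_common_divisor by blast
qed

lemma coprime_dvd_div:
  fixes d f n :: "'a::semiring_gcd"
  assumes "coprime d f" and "f dvd n" and "d dvd n"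
  shows "d dvd n div f"
proof -
  have "n = f * (n div f)"
    using assms(2) by simp
  with assms(1,3) show ?thesis
    by (metis coprime_dvd_mult_right_iff)
qed

lemma gcd_div_div_cross_diff_eq:
  fixes n f g a b :: "'a::ring_gcd"
  assumes "f dvd n" and "g dvd n"
    and "coprime f g" and "coprime f a" and "coprime g b"
  shows "gcd (gcd (n div f) (n div g)) (g * a - b * f) = gcd n (g * a - b * f)"
proof (rule gcd_dvd_antisym)
  let ?D = "g * a - b * f"
  have "n div f dvd n"
    using assms(1) by (metis dvd_div_mult_self dvd_triv_left)
  then show "gcd (gcd (n div f) (n div g)) ?D dvd gcd n ?D"
    by (meson dvd_trans gcd_dvd1 gcd_dvd2 gcd_greatest)
next
  let ?D = "g * a - b * f"
  have coprime_f: "coprime (gcd n ?D) f"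
    using coprime_dvd_cross_diff[of f a g "gcd n ?D" b] assms(3,4) by simp
  have "?D = f * - b - - a * g"
    by (simp add: algebra_simps)
  then have "gcd n ?D dvd f * - b - - a * g"
    by (metis gcd_dvd2)
  moreover have "coprime g (- b)" and "coprime g f"
    using assms(3,5) by (simp_all add: coprime_commute)
  ultimately have coprime_g: "coprime (gcd n ?D) g"
    by (metis coprime_dvd_cross_diff)
  show "gcd n ?D dvd gcd (gcd (n div f) (n div g)) ?D"
    using coprime_dvd_div[OF coprime_f assms(1)] coprime_dvd_div[OF coprime_g assms(2)]
    by simp
qed

theorem lemma4p2:
  fixes g11 g12 f11 f12 :: "'a::{finite,field_gcd} poly" and m :: nat
  assumes "m > 0"
    and "g11 dvd [:0, 1:] ^ m - 1" and "f11 dvd [:0, 1:] ^ m - 1"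
    and "gcd g11 g12 = 1" and "gcd f11 f12 = 1" and "gcd f11 g11 = 1"
  shows "gcd (gcd (([:0, 1:] ^ m - 1) div f11) (([:0, 1:] ^ m - 1) div g11))
             (g11 * f12 - g12 * f11) = 1
         \<longleftrightarrow> gcd ([:0, 1:] ^ m - 1) (g11 * f12 - g12 * f11) = 1"
proof -
  have "coprime f11 g11" and "coprime f11 f12" and "coprime g11 g12"
    using assms(4-6) by (simp_all add: coprime_iff_gcd_eq_1)
  with assms(2,3) show ?thesis
    by (simp add: gcd_div_div_cross_diff_eq)
qed

end
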